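(* Let $E$ be a finite ground set and let $\mathcal{F}\subseteq 2^E$ be a non-empty downward-closed family of feasible solutions, with unit weights (so the value of a set is its cardinality). Consider the robust counterpart $$\max_{S\in\mathcal{F}}\ \min_{f\in E\cup\{\emptyset\}}\ \max_{\substack{e\in (E\setminus(S\cup\{f\}))\cup\{\emptyset\}\\ (S\setminus\{f\})\cup\{e\}\in\mathcal{F}}} |(S\setminus\{f\})\cup\{e\}|.$$ Then there is a maximum-cardinality set $S\in\mathcal{F}$ that is an optimal first-stage solution of this robust counterpart. Furthermore, if some maximum-cardinality set $S\in\mathcal{F}$ is repairable, then $S$ is an optimal first-stage solution.
   Context: Downward-closed means: if $X\in\mathcal{F}$ and $X'\subseteq X$ then $X'\in\mathcal{F}$. In the robust counterpart, choosing $f=\emptyset$ means no element is deleted and choosing $e=\emptyset$ means no element is added. A set $S\in\mathcal{F}$ is called repairable if for every $f\in S$ there exists $e\in E\setminus S$ such that $(S\setminus\{f\})\cup\{e\}\in\mathcal{F}$. *)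

theory Defs
  imports Main
begin

(* "\<emptyset>" choices for f and e are modelled by None; an element x is Some x. *)

definition down_closed :: "'a set set \<Rightarrow> bool" where
  "down_closed F \<longleftrightarrow> (\<forall>X\<in>F. \<forall>X'. X' \<subseteq> X \<longrightarrow> X' \<in> F)"

definition choices :: "'a set \<Rightarrow> 'a option set" where
  "choices E = insert None (Some ` E)"

definition repair_val :: "'a set \<Rightarrow> 'a set set \<Rightarrow> 'a set \<Rightarrow> 'a option \<Rightarrow> nat" where
  "repair_val E F S f =
     Max { card ((S - set_option f) \<union> set_option e) | e.
             e \<in> choices (E - (S \<union> set_option f)) \<and>
             (S - set_option f) \<union> set_option e \<in> F }"

definition robust_val :: "'a set \<Rightarrow> 'a set set \<Rightarrow> 'a set \<Rightarrow> nat" where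
  "robust_val E F S = Min (repair_val E F S ` choices E)"

definition robust_optimal :: "'a set \<Rightarrow> 'a set set \<Rightarrow> 'a set \<Rightarrow> bool" where
  "robust_optimal E F S \<longleftrightarrow> S \<in> F \<and> (\<forall>T\<in>F. robust_val E F T \<le> robust_val E F S)"

definition max_card :: "'a set set \<Rightarrow> 'a set \<Rightarrow> bool" where
  "max_card F S \<longleftrightarrow> S \<in> F \<and> (\<forall>T\<in>F. card T \<le> card S)"

definition repairable :: "'a set \<Rightarrow> 'a set set \<Rightarrow> 'a set \<Rightarrow> bool" where
  "repairable E F S \<longleftrightarrow> S \<in> F \<and> (\<forall>f\<in>S. \<exists>e\<in>E - S. (S - {f}) \<union> {e} \<in> F)"

end

theory Submission
  imports Defs
begin

text \<open>
  Let \<open>S\<close> be a maximum-cardinality feasible set. Deleting an element and adding nothing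
  keeps a set feasible, so every feasible \<open>T\<close> has robust value between \<open>card T - 1\<close> and
  \<open>card T\<close> (at most \<open>1\<close> if \<open>T = {}\<close>), and never more than \<open>card S\<close>. A repairable set
  attains its cardinality, so a repairable maximum set is optimal. Conversely a feasible
  set whose robust value reaches \<open>card S\<close> yields a repairable maximum set: either itself,
  or, if it is empty, a singleton that can be repaired by another feasible singleton.
  Hence if no maximum set is repairable, all robust values are below \<open>card S\<close>, and \<open>S\<close>
  with value at least \<open>card S - 1\<close> is optimal.
\<close>

lemma finite_choices: "finite A \<Longrightarrow> finite (choices A)"
  by (simp add: choices_def)

lemma max_card_exists:
  assumes "finite F" "F \<noteq> {}"
  shows "\<exists>S. max_card F S"
proof -
  have "Max (card ` F) \<in> card ` F"
    using assms by (intro Max_in) auto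
  then obtain S where "S \<in> F" "card S = Max (card ` F)"
    by auto
  then show ?thesis
    using assms(1) unfolding max_card_def by auto
qed

locale independence_system =
  fixes E :: "'a set" and F :: "'a set set"
  assumes finite_ground: "finite E"
    and feasible_subsets: "F \<subseteq> Pow E"
    and feasible_nonempty: "F \<noteq> {}"
    and feasible_down_closed: "down_closed F"
begin

lemma finite_feasible: "finite F"
  using finite_ground feasible_subsets by (meson finite_Pow_iff finite_subset)

lemma feasible_subset_ground: "S \<in> F \<Longrightarrow> S \<subseteq> E"
  using feasible_subsets by blast

lemma finite_if_feasible: "S \<in> F \<Longrightarrow> finite S"
  using feasible_subset_ground finite_ground finite_subset by blast

lemma feasible_subset: "S \<in> F \<Longrightarrow> T \<subseteq> S \<Longrightarrow> T \<in> F"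
  using feasible_down_closed unfolding down_closed_def by blast

lemma empty_feasible: "{} \<in> F"
  using feasible_nonempty feasible_subset by blast

definition repairs :: "'a set \<Rightarrow> 'a option \<Rightarrow> 'a option set" where
  "repairs S f = {e \<in> choices (E - (S \<union> set_option f)). (S - set_option f) \<union> set_option e \<in> F}"

lemma finite_repairs: "finite (repairs S f)"
  unfolding repairs_def by (simp add: finite_choices finite_ground)

lemma None_in_repairs: "S \<in> F \<Longrightarrow> None \<in> repairs S f"
  unfolding repairs_def choices_def using feasible_subset by auto

lemma repair_val_eq_Max:
  "repair_val E F S f = Max ((\<lambda>e. card ((S - set_option f) \<union> set_option e)) ` repairs S f)"
  unfolding repair_val_def repairs_def by (rule arg_cong[where f = Max]) auto

lemma repair_val_ge:
  "e \<in> repairs S f \<Longrightarrow> card ((S - set_option f) \<union> set_option e) \<le> repair_val E F S f"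
  unfolding repair_val_eq_Max using finite_repairs by simp

lemma repair_val_attained:
  assumes "S \<in> F"
  obtains e where "e \<in> repairs S f"
    and "repair_val E F S f = card ((S - set_option f) \<union> set_option e)"
proof -
  have "repair_val E F S f \<in> (\<lambda>e. card ((S - set_option f) \<union> set_option e)) ` repairs S f"
    unfolding repair_val_eq_Max using finite_repairs None_in_repairs[OF assms] by (intro Max_in) auto
  then show thesis
    using that by blast
qed

lemma robust_val_le_repair_val: "f \<in> choices E \<Longrightarrow> robust_val E F S \<le> repair_val E F S f"
  unfolding robust_val_def by (rule Min_le) (auto simp: finite_choices finite_ground)

lemma robust_val_geI: "(\<And>f. f \<in> choices E \<Longrightarrow> k \<le> repair_val E F S f) \<Longrightarrow> k \<le> robust_val E F S"
  unfolding robust_val_def by (auto simp: finite_choices finite_ground choices_def)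

lemma card_diff_le_repair_val: "S \<in> F \<Longrightarrow> card (S - set_option f) \<le> repair_val E F S f"
  using repair_val_ge[OF None_in_repairs] by simp

lemma repair_val_le_Suc_card_diff:
  assumes "S \<in> F"
  shows "repair_val E F S f \<le> Suc (card (S - set_option f))"
proof -
  obtain e where "repair_val E F S f = card ((S - set_option f) \<union> set_option e)"
    using repair_val_attained assms by blast
  moreover have "card ((S - set_option f) \<union> set_option e) \<le> Suc (card (S - set_option f))"
    using finite_if_feasible[OF assms] by (cases e) (auto simp: card_insert_if)
  ultimately show ?thesis
    by simp
qed

lemma repair_val_le_max_card:
  assumes "max_card F M" "S \<in> F"
  shows "repair_val E F S f \<le> card M"
proof -
  obtain e where "e \<in> repairs S f"
    and "repair_val E F S f = card ((S - set_option f) \<union> set_option e)"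
    using repair_val_attained[OF assms(2)] by blast
  with assms(1) show ?thesis
    unfolding max_card_def repairs_def by simp
qed

lemma robust_val_le_max_card:
  assumes "max_card F M" "S \<in> F"
  shows "robust_val E F S \<le> card M"
proof -
  have "robust_val E F S \<le> repair_val E F S None"
    by (rule robust_val_le_repair_val) (simp add: choices_def)
  also have "\<dots> \<le> card M"
    using repair_val_le_max_card[OF assms] .
  finally show ?thesis .
qed

lemma card_minus_one_le_robust_val:
  assumes "S \<in> F"
  shows "card S - 1 \<le> robust_val E F S"
proof (rule robust_val_geI)
  fix f :: "'a option"
  have "card S - 1 \<le> card (S - set_option f)"
    using finite_if_feasible[OF assms] by (cases f) (auto simp: card_Diff_singleton_if)
  then show "card S - 1 \<le> repair_val E F S f"
    using card_diff_le_repair_val[OF assms, of f] by linarith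
qed

lemma robust_val_le_card:
  assumes "S \<in> F" "S \<noteq> {}"
  shows "robust_val E F S \<le> card S"
proof -
  obtain x where x: "x \<in> S"
    using assms(2) by blast
  then have "robust_val E F S \<le> repair_val E F S (Some x)"
    using feasible_subset_ground[OF assms(1)] by (intro robust_val_le_repair_val) (auto simp: choices_def)
  also have "\<dots> \<le> Suc (card (S - {x}))"
    using repair_val_le_Suc_card_diff[OF assms(1), of "Some x"] by simp
  also have "\<dots> = card S"
    using finite_if_feasible[OF assms(1)] x by (rule card_Suc_Diff1)
  finally show ?thesis .
qed

lemma robust_val_empty_le_one: "robust_val E F {} \<le> 1"
  using robust_val_le_repair_val[of None "{}"] repair_val_le_Suc_card_diff[OF empty_feasible, of None]
  by (simp add: choices_def)

lemma card_le_robust_val_if_repairable: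
  assumes "repairable E F S"
  shows "card S \<le> robust_val E F S"
proof (rule robust_val_geI)
  have S: "S \<in> F" "finite S"
    using assms finite_if_feasible unfolding repairable_def by auto
  fix f :: "'a option"
  show "card S \<le> repair_val E F S f"
  proof (cases "\<exists>x. f = Some x \<and> x \<in> S")
    case True
    then obtain x e where x: "f = Some x" "x \<in> S" and e: "e \<in> E - S" "(S - {x}) \<union> {e} \<in> F"
      using assms unfolding repairable_def by blast
    have "card ((S - {x}) \<union> {e}) = card S"
      using S x e card_gt_0_iff[of S] by auto
    moreover have "card ((S - {x}) \<union> {e}) \<le> repair_val E F S f"
      using repair_val_ge[of "Some e" S f] x e by (auto simp: repairs_def choices_def)
    ultimately show ?thesis
      by simp
  next
    case False
    then have "S - set_option f = S"
      by (cases f) auto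
    then show ?thesis
      using card_diff_le_repair_val[OF S(1), of f] by simp
  qed
qed

lemma repairable_if_card_le_robust_val:
  assumes S: "S \<in> F" and card_le: "card S \<le> robust_val E F S"
  shows "repairable E F S"
  unfolding repairable_def
proof (intro conjI ballI)
  fix x assume x: "x \<in> S"
  obtain e where e: "e \<in> repairs S (Some x)"
    and val: "repair_val E F S (Some x) = card ((S - {x}) \<union> set_option e)"
    using repair_val_attained[OF S, of "Some x"] by auto
  have "robust_val E F S \<le> repair_val E F S (Some x)"
    using x feasible_subset_ground[OF S] by (intro robust_val_le_repair_val) (auto simp: choices_def)
  with card_le val have "card S \<le> card ((S - {x}) \<union> set_option e)"
    by simp
  moreover have "card (S - {x}) < card S"
    using finite_if_feasible[OF S] x by (rule card_Diff1_less)
  ultimately obtain a where "e = Some a"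
    by (cases e) auto
  then show "\<exists>a\<in>E - S. (S - {x}) \<union> {a} \<in> F"
    using e by (auto simp: repairs_def choices_def)
qed (fact S)

lemma feasible_singleton_if_repair_val_empty:
  assumes "1 \<le> repair_val E F {} f"
  obtains a where "a \<in> E - set_option f" "{a} \<in> F"
proof -
  obtain e where "e \<in> repairs {} f"
    and "repair_val E F {} f = card (set_option e)"
    using repair_val_attained[OF empty_feasible, of f] by auto
  with assms that show thesis
    by (cases e) (auto simp: repairs_def choices_def)
qed

lemma two_feasible_singletons_if_robust_val_empty:
  assumes "1 \<le> robust_val E F {}"
  obtains a b where "a \<noteq> b" "{a} \<in> F" "{b} \<in> F"
proof -
  have "robust_val E F {} \<le> repair_val E F {} None"
    by (rule robust_val_le_repair_val) (simp add: choices_def)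
  with assms obtain a where a: "a \<in> E" "{a} \<in> F"
    using feasible_singleton_if_repair_val_empty[of None] by force
  have "robust_val E F {} \<le> repair_val E F {} (Some a)"
    by (rule robust_val_le_repair_val) (simp add: choices_def a)
  with assms obtain b where "b \<in> E - {a}" "{b} \<in> F"
    using feasible_singleton_if_repair_val_empty[of "Some a"] by force
  with a that show thesis
    by blast
qed

lemma max_card_repairable_if_le_robust_val:
  assumes S: "max_card F S" and T: "T \<in> F" and le: "card S \<le> robust_val E F T"
  shows "\<exists>R. max_card F R \<and> repairable E F R"
proof (cases "T = {}")
  case False
  then have "card T = card S" "card S \<le> robust_val E F T"
    using S T le robust_val_le_card[OF T] unfolding max_card_def by (auto intro: le_antisym)
  then show ?thesis
    using S T repairable_if_card_le_robust_val unfolding max_card_def by auto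
next
  case True
  show ?thesis
  proof (cases "card S = 0")
    case True
    then have "S = {}"
      using S finite_if_feasible unfolding max_card_def by auto
    then show ?thesis
      using S empty_feasible unfolding repairable_def by auto
  next
    case False
    with le \<open>T = {}\<close> robust_val_empty_le_one have "card S = 1" "1 \<le> robust_val E F {}"
      by auto
    then obtain a b where ab: "a \<noteq> b" "{a} \<in> F" "{b} \<in> F"
      using two_feasible_singletons_if_robust_val_empty by blast
    then have "max_card F {a}"
      using S \<open>card S = 1\<close> unfolding max_card_def by auto
    moreover have "repairable E F {a}"
      using ab feasible_subset_ground unfolding repairable_def by auto
    ultimately show ?thesis
      by blast
  qed
qed

lemma robust_optimal_if_max_card_repairable:
  assumes "max_card F S" "repairable E F S"
  shows "robust_optimal E F S"
  using assms robust_val_le_max_card card_le_robust_val_if_repairable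
  unfolding robust_optimal_def max_card_def by (blast intro: le_trans)

lemma robust_optimal_if_no_max_card_repairable:
  assumes S: "max_card F S" and none: "\<nexists>R. max_card F R \<and> repairable E F R"
  shows "robust_optimal E F S"
  unfolding robust_optimal_def
proof (intro conjI ballI)
  show "S \<in> F"
    using S unfolding max_card_def by simp
  fix T assume "T \<in> F"
  then have "robust_val E F T < card S"
    using max_card_repairable_if_le_robust_val[OF S] none by (meson not_le)
  then show "robust_val E F T \<le> robust_val E F S"
    using card_minus_one_le_robust_val[OF \<open>S \<in> F\<close>] by linarith
qed

end

theorem mainTheorem1:
  fixes E :: "'a set" and F :: "'a set set"
  assumes "finite E" and "F \<subseteq> Pow E" and "F \<noteq> {}" and "down_closed F"
  shows "(\<exists>S. max_card F S \<and> robust_optimal E F S) \<and>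
         (\<forall>S. max_card F S \<and> repairable E F S \<longrightarrow> robust_optimal E F S)"
proof -
  interpret independence_system E F
    using assms by unfold_locales
  obtain S where S: "max_card F S"
    using max_card_exists finite_feasible assms(3) by blast
  have "\<exists>S. max_card F S \<and> robust_optimal E F S"
    using S robust_optimal_if_max_card_repairable robust_optimal_if_no_max_card_repairable by blast
  then show ?thesis
    using robust_optimal_if_max_card_repairable by blast
qed

end
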